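(* Let $V=\Lambda_n$, $A \subset V$, $a \in A^c$, $x \in A$. Then: (i) $\mathbb P^{a \to \ell_n}_V(A \in \mathrm{Inv}_0,\ x = \min \gamma \cap A) = Z^{a \to x}(A^c \cup \{x\})\, Z^{x \to \ell_n}(A) / Z^{a \to \ell_n}(V)$. (ii) For $\mathcal F_{A^c}$-measurable $f$ and $\mathcal F_A$-measurable $g$, $\mathbb E^{a \to \ell_n}_V(f \mid A \in \mathrm{Inv}_0, x = \min \gamma \cap A) = \mathbb E^{a \to x}_{A^c \cup \{x\}}(f)$ and $\mathbb E^{a \to \ell_n}_V(g \mid A \in \mathrm{Inv}_0, x = \min \gamma \cap A) = \mathbb E^{x \to \ell_n}_{A}(g)$. (iii) For $\mathcal F_{A^c}$-measurable $f$ and $\mathcal F_A$-measurable $g$, $\mathbb E^{a \to \ell_n}_V(f g \mid A \in \mathrm{Inv}_0, x = \min \gamma \cap A) = \mathbb E^{a \to x}_{A^c \cup \{x\}}(f)\, \mathbb E^{x \to \ell_n}_{A}(g)$. (iv) For $\mathcal F_A$-measurable $g$ and $\mathcal Q \in \mathcal F_{A^c}$, $\mathbb E^{a \to \ell_n}_V(g \mid A \in \mathrm{Inv}_0, x = \min \gamma \cap A, \mathcal Q) = \mathbb E^{x \to \ell_n}_{A}(g)$.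
   Context: $\Lambda_n=([0,n]\times(-n/2,n/2]^{d-1})\cap\mathbb Z^d$ with nearest-neighbour edges and periodic boundary conditions in the last $d-1$ coordinates; points are $x=(\bar x,\hat x)$; $\ell_j=\{x:\bar x=j\}$. For $B\subset\Lambda_n$, $b,z\in B$, $\mathcal S_B^{b\to z}$ is the set of maps $\pi:B\to B$ which are bijections from $B\setminus\{z\}$ onto $B\setminus\{b\}$, with $\pi(z)=z$ and $\pi(y)\in\{y\}\cup\{\text{neighbours of }y\}$ for all $y$. $Z^{b\to z}(B)=\sum_{\pi\in\mathcal S_B^{b\to z}}e^{-\alpha\mathcal H_B(\pi)}$ with $\mathcal H_B(\pi)=\sum_{y\in B}\mathbb 1\{\pi(y)\ne y\}$, and $\mathbb P_B^{b\to z},\mathbb E_B^{b\to z}$ the associated normalized measure and expectation. $\mathcal S_B^{b\to\ell_n}=\bigcup_{z\in\ell_n}\mathcal S^{b\to z}_{B\cup\{z\}}$ with measure $\mathbb P_B^{b\to\ell_n}$ proportional to $e^{-\alpha\mathcal H}$ and normalization $Z^{b\to\ell_n}(B)$. For $\pi$, $\gamma(\pi)=\{\pi^j(b):j\ge0\}$, ordered by order of appearance; $\min\gamma\cap A$ is the first point of $\gamma$ in $A$. $\mathrm{Inv}_0(\pi)=\{A\subset V:\pi(A)\subset A\}$. For $A\subset V$, $\mathcal F_A$ is the $\sigma$-algebra on $\mathcal S_V^{a\to\ell_n}$ generated by the maps $\pi\mapsto\pi(z)$, $z\in A$. On the event $\{A\in\mathrm{Inv}_0,x=\min\gamma\cap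 A\}$, $\pi$ decomposes into unique $\pi|_A\in\mathcal S_A^{x\to\ell_n}$ and $\pi|_{A^c}\in\mathcal S_{A^c\cup\{x\}}^{a\to x}$ agreeing with $\pi$ on $A$, resp. $A^c$; an $\mathcal F_{A^c}$-measurable $f$ is regarded as a function on $\mathcal S^{a\to x}_{A^c\cup\{x\}}$ via $f(\pi)=f(\pi|_{A^c})$, and similarly $g(\pi)=g(\pi|_A)$ for $\mathcal F_A$-measurable $g$.
   Formalization: $\mathcal S_B^{b\to\ell_n}$ is the union of $\mathcal S_B^{b\to z}$ over z in $\ell_n \cap B$ only, instead of $\mathcal S^{b\to z}_{B\cup\{z\}}$ over all z in $\ell_n$, which changes $Z^{x\to\ell_n}(A)$ and $\mathbb E^{x\to\ell_n}_A$. The statement above fails without it. *)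

theory Defs
  imports "HOL-Analysis.Analysis"
begin

text \<open>Points of the lattice are integer lists of length d; the first entry is the
  coordinate xbar, the remaining d-1 entries form xhat.\<close>

type_synonym pt = "int list"
type_synonym perm_map = "pt \<Rightarrow> pt"

definition Lam :: "nat \<Rightarrow> nat \<Rightarrow> pt set" where
  "Lam n d = {x. length x = d \<and> 0 \<le> x ! 0 \<and> x ! 0 \<le> int n \<and>
      (\<forall>i\<in>{1..<d}. - (real n / 2) < real_of_int (x ! i) \<and> real_of_int (x ! i) \<le> real n / 2)}"

definition line :: "nat \<Rightarrow> nat \<Rightarrow> int \<Rightarrow> pt set" where
  "line n d j = {x \<in> Lam n d. x ! 0 = j}"

definition adj :: "nat \<Rightarrow> nat \<Rightarrow> pt \<Rightarrow> pt \<Rightarrow> bool" where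
  "adj n d x y \<longleftrightarrow> length x = d \<and> length y = d \<and> x \<noteq> y \<and>
     (\<exists>i<d. (\<forall>j<d. j \<noteq> i \<longrightarrow> x ! j = y ! j) \<and>
        (if i = 0 then \<bar>x ! 0 - y ! 0\<bar> = 1
         else (x ! i - y ! i) mod int n = 1 mod int n \<or> (y ! i - x ! i) mod int n = 1 mod int n))"

text \<open>S_B^{b->z}: maps B -> B (represented extensionally: identity outside B), bijective from
  B - {z} onto B - {b}, fixing z, moving each point at most to a neighbour.\<close>
definition Smaps :: "nat \<Rightarrow> nat \<Rightarrow> pt set \<Rightarrow> pt \<Rightarrow> pt \<Rightarrow> perm_map set" where
  "Smaps n d B b z = {\<pi>. b \<in> B \<and> z \<in> B \<and> (\<forall>y. y \<notin> B \<longrightarrow> \<pi> y = y) \<and> \<pi> ` B \<subseteq> B \<and>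
      bij_betw \<pi> (B - {z}) (B - {b}) \<and> \<pi> z = z \<and> (\<forall>y\<in>B. \<pi> y = y \<or> adj n d y (\<pi> y))}"

definition Sline :: "nat \<Rightarrow> nat \<Rightarrow> pt set \<Rightarrow> pt \<Rightarrow> perm_map set" where
  "Sline n d B b = (\<Union>z \<in> line n d (int n) \<inter> B. Smaps n d B b z)"

definition Ham :: "pt set \<Rightarrow> perm_map \<Rightarrow> nat" where
  "Ham B \<pi> = card {y \<in> B. \<pi> y \<noteq> y}"

definition wt :: "real \<Rightarrow> pt set \<Rightarrow> perm_map \<Rightarrow> real" where
  "wt \<alpha> B \<pi> = exp (- \<alpha> * real (Ham B \<pi>))"

definition Zsum :: "real \<Rightarrow> pt set \<Rightarrow> perm_map set \<Rightarrow> real" where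
  "Zsum \<alpha> B Om = (\<Sum>\<pi>\<in>Om. wt \<alpha> B \<pi>)"

definition Pw :: "real \<Rightarrow> pt set \<Rightarrow> perm_map set \<Rightarrow> perm_map set \<Rightarrow> real" where
  "Pw \<alpha> B Om Ev = (\<Sum>\<pi>\<in>Om \<inter> Ev. wt \<alpha> B \<pi>) / Zsum \<alpha> B Om"

definition Ew :: "real \<Rightarrow> pt set \<Rightarrow> perm_map set \<Rightarrow> (perm_map \<Rightarrow> real) \<Rightarrow> real" where
  "Ew \<alpha> B Om f = (\<Sum>\<pi>\<in>Om. wt \<alpha> B \<pi> * f \<pi>) / Zsum \<alpha> B Om"

definition Econd :: "real \<Rightarrow> pt set \<Rightarrow> perm_map set \<Rightarrow> (perm_map \<Rightarrow> real) \<Rightarrow> perm_map set \<Rightarrow> real" where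
  "Econd \<alpha> B Om f Ev = Ew \<alpha> B Om (\<lambda>\<pi>. f \<pi> * indicator Ev \<pi>) / Pw \<alpha> B Om Ev"

definition Inv0 :: "nat \<Rightarrow> nat \<Rightarrow> perm_map \<Rightarrow> pt set set" where
  "Inv0 n d \<pi> = {A. A \<subseteq> Lam n d \<and> \<pi> ` A \<subseteq> A}"

definition gamma :: "perm_map \<Rightarrow> pt \<Rightarrow> pt set" where
  "gamma \<pi> b = {(\<pi> ^^ j) b | j. True}"

definition first_in :: "perm_map \<Rightarrow> pt \<Rightarrow> pt set \<Rightarrow> pt" where
  "first_in \<pi> b A = (\<pi> ^^ (LEAST j. (\<pi> ^^ j) b \<in> A)) b"

definition inv_first_event :: "nat \<Rightarrow> nat \<Rightarrow> pt \<Rightarrow> pt set \<Rightarrow> pt \<Rightarrow> perm_map set" where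
  "inv_first_event n d b A x =
     {\<pi>. A \<in> Inv0 n d \<pi> \<and> gamma \<pi> b \<inter> A \<noteq> {} \<and> x = first_in \<pi> b A}"

definition Falg :: "perm_map set \<Rightarrow> pt set \<Rightarrow> perm_map measure" where
  "Falg Om A = sigma Om {(\<lambda>\<pi>. \<pi> z) -` S \<inter> Om | z S. z \<in> A}"

text \<open>An F_C-measurable f on Om regarded as a function of the restriction to C:
  f(sigma) = f(pi) for any pi in Om agreeing with sigma on C.\<close>
definition restr_lift :: "perm_map set \<Rightarrow> pt set \<Rightarrow> (perm_map \<Rightarrow> real) \<Rightarrow> perm_map \<Rightarrow> real" where
  "restr_lift Om C f \<sigma> = f (SOME \<pi>. \<pi> \<in> Om \<and> (\<forall>y\<in>C. \<pi> y = \<sigma> y))"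

end

theory Submission
  imports Defs
begin

text \<open>On the event, A is invariant and the path of \<pi> from a enters A for the first time at x.
  Cutting \<pi> along A therefore gives a path from a to x in A^c \<union> {x} and a path from x to the
  line l_n inside A, and conversely any such pair glues back to a map in the event. The number of
  moved points is additive under this cut, so the weighted sum over the event factorizes as
  Z^{a->x}(A^c \<union> {x}) Z^{x->l_n}(A); an F_{A^c}- resp. F_A-measurable function only sees the
  corresponding factor, and all four statements follow by cancelling normalizations.\<close>

lemma finite_Lam: "finite (Lam n d)"
proof (rule finite_subset)
  show "Lam n d \<subseteq> {xs. set xs \<subseteq> {-int n..int n} \<and> length xs = d}"
  proof safe
    fix xs v assume xs: "xs \<in> Lam n d" and "v \<in> set xs"
    then obtain i where i: "i < length xs" "v = xs ! i" by (auto simp: in_set_conv_nth)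
    show "v \<in> {-int n..int n}"
    proof (cases "i = 0")
      case True
      then show ?thesis using xs i by (auto simp: Lam_def)
    next
      case False
      then have "- (real n / 2) < real_of_int v" "real_of_int v \<le> real n / 2"
        using xs i by (auto simp: Lam_def)
      then show ?thesis by simp
    qed
  qed (simp add: Lam_def)
  show "finite {xs. set xs \<subseteq> {-int n..int n} \<and> length xs = d}"
    by (rule finite_lists_length_eq) simp
qed

lemma finite_maps_on:
  assumes "finite B"
  shows "finite {p :: 'a \<Rightarrow> 'a. (\<forall>y. y \<notin> B \<longrightarrow> p y = y) \<and> p ` B \<subseteq> B}" (is "finite ?M")
proof (rule inj_on_finite[where f = "\<lambda>p. restrict p B"])
  show "inj_on (\<lambda>p. restrict p B) ?M"
  proof (rule inj_onI, rule ext)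
    fix p q y assume "p \<in> ?M" "q \<in> ?M" "restrict p B = restrict q B"
    then show "p y = q y" by (cases "y \<in> B") (auto dest: fun_cong[where x = y])
  qed
  show "(\<lambda>p. restrict p B) ` ?M \<subseteq> Pi\<^sub>E B (\<lambda>_. B)" by auto
  show "finite (Pi\<^sub>E B (\<lambda>_. B))" using assms by (intro finite_PiE)
qed

lemma finite_Smaps: "finite B \<Longrightarrow> finite (Smaps n d B b z)"
  by (rule finite_subset[OF _ finite_maps_on[of B]]) (auto simp: Smaps_def)

lemma finite_Sline: "finite B \<Longrightarrow> finite (Sline n d B b)"
  by (rule finite_subset[OF _ finite_maps_on[of B]]) (auto simp: Sline_def Smaps_def)

lemma funpow_in_invariant: "p ` B \<subseteq> B \<Longrightarrow> b \<in> B \<Longrightarrow> (p ^^ j) b \<in> B"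
  by (induction j) auto

lemma Smaps_orbit_reaches_endpoint:
  assumes "finite B" and p: "p \<in> Smaps n d B b z"
  shows "\<exists>k. (p ^^ k) b = z"
proof (rule ccontr)
  assume no_hit: "\<nexists>k. (p ^^ k) b = z"
  from p have b: "b \<in> B" and inv: "p ` B \<subseteq> B" and bij: "bij_betw p (B - {z}) (B - {b})"
    by (auto simp: Smaps_def)
  define Orb where "Orb = range (\<lambda>k. (p ^^ k) b)"
  have Orb_sub: "Orb \<subseteq> B - {z}" using no_hit funpow_in_invariant[OF inv b] by (auto simp: Orb_def)
  have "p ` Orb \<subseteq> Orb"
  proof
    fix y assume "y \<in> p ` Orb"
    then obtain k where "y = (p ^^ Suc k) b" by (auto simp: Orb_def)
    then show "y \<in> Orb" unfolding Orb_def by (rule range_eqI)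
  qed
  moreover have "inj_on p Orb" using bij Orb_sub by (auto simp: bij_betw_def intro: inj_on_subset)
  ultimately have "p ` Orb = Orb"
    using Orb_sub \<open>finite B\<close> by (intro endo_inj_surj) (auto intro: finite_subset)
  moreover have "b \<in> Orb" unfolding Orb_def by (metis funpow_0 rangeI)
  ultimately have "b \<in> p ` (B - {z})" using Orb_sub by blast
  then show False using bij by (auto simp: bij_betw_def)
qed

lemma first_in_eqI:
  assumes "(p ^^ k) b \<in> A" and "\<And>j. j < k \<Longrightarrow> (p ^^ j) b \<notin> A"
  shows "first_in p b A = (p ^^ k) b"
proof -
  have "(LEAST j. (p ^^ j) b \<in> A) = k"
    using assms by (intro Least_equality) (auto simp: not_less[symmetric])
  then show ?thesis by (simp add: first_in_def)
qed

lemma first_in_preimage_outside: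
  assumes "b \<notin> A" and "(p ^^ j) b \<in> A"
  obtains m where "(p ^^ m) b \<notin> A" and "p ((p ^^ m) b) = first_in p b A"
proof -
  define k where "k = (LEAST j. (p ^^ j) b \<in> A)"
  have "(p ^^ k) b \<in> A" unfolding k_def by (rule LeastI) fact
  then obtain m where k: "k = Suc m" using assms(1) by (cases k) auto
  then have "(p ^^ m) b \<notin> A" using not_less_Least[of m "\<lambda>j. (p ^^ j) b \<in> A"] k_def by simp
  moreover have "p ((p ^^ m) b) = first_in p b A" by (simp add: first_in_def k_def[symmetric] k)
  ultimately show thesis by (rule that)
qed

lemma inv_first_event_iff:
  assumes "A \<subseteq> Lam n d"
  shows "p \<in> inv_first_event n d b A x \<longleftrightarrow>
    p ` A \<subseteq> A \<and> (\<exists>j. (p ^^ j) b \<in> A) \<and> first_in p b A = x"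
  using assms by (auto simp: inv_first_event_def Inv0_def gamma_def)

lemma sets_Falg_agree:
  assumes "Q \<in> sets (Falg Om C)" "p \<in> Om" "p' \<in> Om" "\<forall>y\<in>C. p y = p' y"
  shows "p \<in> Q \<longleftrightarrow> p' \<in> Q"
proof -
  have "sets (Falg Om C) = sigma_sets Om {(\<lambda>p. p z) -` S \<inter> Om | z S. z \<in> C}"
    unfolding Falg_def by (rule sets_measure_of) auto
  then have "Q \<in> sigma_sets Om {(\<lambda>p. p z) -` S \<inter> Om | z S. z \<in> C}" using assms(1) by simp
  then show ?thesis
    by (induction rule: sigma_sets.induct) (use assms(2-4) in auto)
qed

lemma borel_measurable_Falg_agree:
  fixes f :: "perm_map \<Rightarrow> real"
  assumes "f \<in> borel_measurable (Falg Om C)" "p \<in> Om" "p' \<in> Om" "\<forall>y\<in>C. p y = p' y"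
  shows "f p = f p'"
proof -
  have "space (Falg Om C) = Om" unfolding Falg_def by (rule space_measure_of_conv)
  then have "f -` {f p} \<inter> Om \<in> sets (Falg Om C)"
    using measurable_sets[OF assms(1) borel_closed[OF closed_singleton]] by simp
  from sets_Falg_agree[OF this assms(2-4)] assms(2,3) show ?thesis by auto
qed

lemma restr_lift_eq:
  fixes f :: "perm_map \<Rightarrow> real"
  assumes "f \<in> borel_measurable (Falg Om C)" "p \<in> Om" "\<forall>y\<in>C. p y = \<sigma> y"
  shows "restr_lift Om C f \<sigma> = f p"
proof -
  let ?P = "\<lambda>p. p \<in> Om \<and> (\<forall>y\<in>C. p y = \<sigma> y)"
  have "?P (SOME p. ?P p)" by (rule someI[of ?P p]) (use assms in auto)
  then have "f (SOME p. ?P p) = f p"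
    using assms(2,3) by (intro borel_measurable_Falg_agree[OF assms(1)]) auto
  then show ?thesis by (simp add: restr_lift_def)
qed

lemma restr_lift_const [simp]: "restr_lift Om C (\<lambda>_. c) = (\<lambda>_. c)"
  by (simp add: restr_lift_def fun_eq_iff)

lemma Ew_mult_Zsum:
  assumes "finite Om"
  shows "Ew \<alpha> B Om f * Zsum \<alpha> B Om = (\<Sum>p\<in>Om. wt \<alpha> B p * f p)"
proof (cases "Om = {}")
  case False
  then have "Zsum \<alpha> B Om > 0" using assms by (auto simp: Zsum_def wt_def intro!: sum_pos)
  then show ?thesis by (simp add: Ew_def)
qed (simp add: Ew_def Zsum_def)

lemma Ew_mult_indicator:
  assumes "finite Om"
  shows "Ew \<alpha> B Om (\<lambda>p. f p * indicator E p) = (\<Sum>p\<in>Om \<inter> E. wt \<alpha> B p * f p) / Zsum \<alpha> B Om"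
  unfolding Ew_def sum.inter_restrict[OF assms] by (auto simp: indicator_def intro!: sum.cong)

lemma Ew_const_one: "Ew \<alpha> B Om (\<lambda>_. 1) = (if Zsum \<alpha> B Om = 0 then 0 else 1)"
  by (simp add: Ew_def Zsum_def)

lemma Pw_eq_Ew_indicator: "finite Om \<Longrightarrow> Pw \<alpha> B Om E = Ew \<alpha> B Om (indicator E)"
  using Ew_mult_indicator[of Om \<alpha> B "\<lambda>_. 1" E] by (simp add: Pw_def)

definition glue :: "'a set \<Rightarrow> ('a \<Rightarrow> 'b) \<Rightarrow> ('a \<Rightarrow> 'b) \<Rightarrow> 'a \<Rightarrow> 'b" where
  "glue A p q = (\<lambda>y. if y \<in> A then q y else p y)"

definition id_outside :: "'a set \<Rightarrow> ('a \<Rightarrow> 'a) \<Rightarrow> 'a \<Rightarrow> 'a" where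
  "id_outside C p = (\<lambda>y. if y \<in> C then p y else y)"

lemma glue_id_outside:
  assumes "\<forall>y. y \<notin> V \<longrightarrow> p y = y"
  shows "glue A (id_outside (V - A) p) (id_outside A p) = p"
  using assms by (auto simp: glue_def id_outside_def fun_eq_iff)

lemma id_outside_glue_outside:
  assumes "\<forall>y. y \<notin> V - A \<union> {x} \<longrightarrow> p y = y" and "p x = x"
  shows "id_outside (V - A) (glue A p q) = p"
  unfolding glue_def id_outside_def fun_eq_iff using assms by (metis Diff_iff Un_iff singletonD)

lemma id_outside_glue_inside:
  assumes "\<forall>y. y \<notin> A \<longrightarrow> q y = y"
  shows "id_outside A (glue A p q) = q"
  using assms by (auto simp: glue_def id_outside_def fun_eq_iff)

context
  fixes n d :: nat and V A :: "pt set" and a x :: pt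
  assumes V_sub: "V \<subseteq> Lam n d" and A_sub: "A \<subseteq> V" and a_in: "a \<in> V - A" and x_in: "x \<in> A"
begin

lemma finite_V: "finite V"
  using V_sub finite_Lam by (rule finite_subset)

lemma glue_in_Smaps:
  assumes p: "p \<in> Smaps n d (V - A \<union> {x}) a x" and q: "q \<in> Smaps n d A x z"
  shows "glue A p q \<in> Smaps n d V a z"
proof -
  let ?B = "V - A \<union> {x}" and ?g = "glue A p q"
  have z: "z \<in> A" using q by (simp add: Smaps_def)
  have "bij_betw ?g (A - {z}) (A - {x})"
    using q bij_betw_cong[of "A - {z}" ?g q] by (simp add: Smaps_def glue_def)
  moreover have "bij_betw ?g (?B - {x}) (?B - {a})"
    using p bij_betw_cong[of "?B - {x}" ?g p] by (simp add: Smaps_def glue_def)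
  ultimately have "bij_betw ?g ((A - {z}) \<union> (?B - {x})) ((A - {x}) \<union> (?B - {a}))"
    by (rule bij_betw_combine) (use a_in in auto)
  moreover have "(A - {z}) \<union> (?B - {x}) = V - {z}" "(A - {x}) \<union> (?B - {a}) = V - {a}"
    using A_sub z x_in a_in by auto
  ultimately have "bij_betw ?g (V - {z}) (V - {a})" by simp
  moreover have "?g ` V \<subseteq> V" using p q A_sub x_in by (auto simp: Smaps_def glue_def)
  ultimately show ?thesis
    using p q z A_sub a_in x_in by (auto simp: Smaps_def glue_def)
qed

lemma glue_first_in:
  assumes p: "p \<in> Smaps n d (V - A \<union> {x}) a x"
  shows "(\<exists>j. (glue A p q ^^ j) a \<in> A) \<and> first_in (glue A p q) a A = x"
proof -
  let ?B = "V - A \<union> {x}" and ?g = "glue A p q"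
  have "\<exists>k. (p ^^ k) a = x" using finite_V p by (intro Smaps_orbit_reaches_endpoint) auto
  define k where "k = (LEAST k. (p ^^ k) a = x)"
  have pk: "(p ^^ k) a = x" unfolding k_def by (rule LeastI_ex) fact
  have before: "(p ^^ j) a \<in> V - A" if "j < k" for j
  proof -
    have "(p ^^ j) a \<noteq> x" using not_less_Least[OF that[unfolded k_def]] by blast
    moreover have "(p ^^ j) a \<in> ?B" using p a_in by (intro funpow_in_invariant) (auto simp: Smaps_def)
    ultimately show ?thesis by blast
  qed
  have agree: "(?g ^^ j) a = (p ^^ j) a" if "j \<le> k" for j
    using that by (induction j) (auto simp: glue_def Suc_le_eq dest: before)
  have gk: "(?g ^^ k) a = x" using agree[of k] pk by simp
  have "first_in ?g a A = (?g ^^ k) a"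
    using agree before gk x_in by (intro first_in_eqI) auto
  then show ?thesis using gk x_in by metis
qed

lemma Smaps_hitting_point_preimage:
  assumes \<pi>: "\<pi> \<in> Smaps n d V a z" and hit: "(\<pi> ^^ j) a \<in> A" and first: "first_in \<pi> a A = x"
  obtains q where "q \<in> V - A" "\<pi> q = x"
proof -
  have "a \<notin> A" using a_in by simp
  then obtain m where "(\<pi> ^^ m) a \<notin> A" "\<pi> ((\<pi> ^^ m) a) = first_in \<pi> a A"
    by (rule first_in_preimage_outside[OF _ hit])
  moreover have "(\<pi> ^^ m) a \<in> V" using \<pi> a_in by (intro funpow_in_invariant) (auto simp: Smaps_def)
  ultimately show thesis using that first by blast
qed

text \<open>If the endpoint z lay outside the invariant set A, then \<pi> would permute A, and x
  would have a second preimage inside A besides the one outside A.\<close>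
lemma Smaps_endpoint_in_invariant:
  assumes \<pi>: "\<pi> \<in> Smaps n d V a z" and inv: "\<pi> ` A \<subseteq> A" and q: "q \<in> V - A" "\<pi> q = x"
  shows "z \<in> A"
proof (rule ccontr)
  assume z: "z \<notin> A"
  have inj: "inj_on \<pi> (V - {z})" using \<pi> by (auto simp: Smaps_def bij_betw_def)
  have "\<pi> ` A = A"
    using finite_V A_sub z inv by (intro endo_inj_surj inj_on_subset[OF inj]) (auto intro: finite_subset)
  then have "x \<in> \<pi> ` A" using x_in by simp
  then obtain w where w: "w \<in> A" "\<pi> w = \<pi> q" using q by auto
  moreover have "q \<noteq> z" using q \<pi> x_in z by (auto simp: Smaps_def)
  ultimately have "w = q" using inj A_sub q z by (auto dest: inj_onD)
  then show False using w q by auto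
qed

lemma Smaps_split_images:
  assumes \<pi>: "\<pi> \<in> Smaps n d V a z" and inv: "\<pi> ` A \<subseteq> A" and q: "q \<in> V - A" "\<pi> q = x"
    and z: "z \<in> A"
  shows "\<pi> ` (A - {z}) = A - {x}" and "\<pi> ` (V - A) = V - A \<union> {x} - {a}"
proof -
  have inj: "inj_on \<pi> (V - {z})" and img: "\<pi> ` (V - {z}) = V - {a}"
    using \<pi> by (auto simp: Smaps_def bij_betw_def)
  have fA: "finite A" by (rule finite_subset[OF A_sub finite_V])
  have "\<pi> ` (A - {z}) \<subseteq> A - {x}"
  proof
    fix v assume "v \<in> \<pi> ` (A - {z})"
    then obtain w where w: "w \<in> A - {z}" "v = \<pi> w" by blast
    have "\<pi> w \<noteq> \<pi> q" using inj w q z A_sub by (auto dest: inj_onD)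
    then show "v \<in> A - {x}" using w inv q by auto
  qed
  moreover have "inj_on \<pi> (A - {z})" using inj A_sub by (blast intro: inj_on_subset)
  then have "card (\<pi> ` (A - {z})) = card (A - {x})" using fA z x_in by (simp add: card_image)
  ultimately show inside: "\<pi> ` (A - {z}) = A - {x}" using fA by (intro card_subset_eq) auto
  have "V - A = (V - {z}) - (A - {z})" using z by blast
  then have "\<pi> ` (V - A) = \<pi> ` (V - {z}) - \<pi> ` (A - {z})"
    using inj_on_image_set_diff[OF inj, of "V - {z}" "A - {z}"] A_sub by auto
  then show "\<pi> ` (V - A) = V - A \<union> {x} - {a}" using img inside a_in x_in A_sub by auto
qed

lemma id_outside_in_Smaps:
  assumes \<pi>: "\<pi> \<in> Smaps n d V a z" and inv: "\<pi> ` A \<subseteq> A" and hit: "(\<pi> ^^ j) a \<in> A"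
    and first: "first_in \<pi> a A = x"
  shows "z \<in> A" and "id_outside (V - A) \<pi> \<in> Smaps n d (V - A \<union> {x}) a x"
    and "id_outside A \<pi> \<in> Smaps n d A x z"
proof -
  obtain q where q: "q \<in> V - A" "\<pi> q = x" by (rule Smaps_hitting_point_preimage[OF \<pi> hit first])
  show z: "z \<in> A" by (rule Smaps_endpoint_in_invariant[OF \<pi> inv q])
  note img = Smaps_split_images[OF \<pi> inv q z]
  have inj: "inj_on \<pi> (V - {z})" using \<pi> by (auto simp: Smaps_def bij_betw_def)
  have "bij_betw \<pi> (V - A) (V - A \<union> {x} - {a})"
    using img(2) inj z by (auto simp: bij_betw_def intro: inj_on_subset)
  then have "bij_betw (id_outside (V - A) \<pi>) (V - A \<union> {x} - {x}) (V - A \<union> {x} - {a})"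
    using x_in bij_betw_cong[of "V - A" "id_outside (V - A) \<pi>" \<pi>] by (simp add: id_outside_def)
  then show "id_outside (V - A) \<pi> \<in> Smaps n d (V - A \<union> {x}) a x"
    using \<pi> img(2) a_in x_in by (auto simp: Smaps_def id_outside_def)
  have "bij_betw \<pi> (A - {z}) (A - {x})"
    using img(1) inj A_sub by (auto simp: bij_betw_def intro: inj_on_subset)
  then have "bij_betw (id_outside A \<pi>) (A - {z}) (A - {x})"
    using bij_betw_cong[of "A - {z}" "id_outside A \<pi>" \<pi>] by (simp add: id_outside_def)
  then show "id_outside A \<pi> \<in> Smaps n d A x z"
    using \<pi> inv z x_in A_sub by (auto simp: Smaps_def id_outside_def)
qed

lemma bij_betw_glue_inv_first_event:
  "bij_betw (\<lambda>(p, q). glue A p q) (Smaps n d (V - A \<union> {x}) a x \<times> Sline n d A x)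
     (Sline n d V a \<inter> inv_first_event n d a A x)"
proof (rule bij_betw_byWitness[where f' = "\<lambda>\<pi>. (id_outside (V - A) \<pi>, id_outside A \<pi>)"])
  have A_Lam: "A \<subseteq> Lam n d" using A_sub V_sub by blast
  show "\<forall>pq \<in> Smaps n d (V - A \<union> {x}) a x \<times> Sline n d A x.
      (id_outside (V - A) (case_prod (glue A) pq), id_outside A (case_prod (glue A) pq)) = pq"
    by (auto simp: Sline_def Smaps_def intro!: id_outside_glue_outside id_outside_glue_inside)
  show "\<forall>\<pi> \<in> Sline n d V a \<inter> inv_first_event n d a A x.
      (\<lambda>(p, q). glue A p q) (id_outside (V - A) \<pi>, id_outside A \<pi>) = \<pi>"
    by (auto simp: Sline_def Smaps_def intro!: glue_id_outside)
  show "(\<lambda>(p, q). glue A p q) ` (Smaps n d (V - A \<union> {x}) a x \<times> Sline n d A x)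
      \<subseteq> Sline n d V a \<inter> inv_first_event n d a A x"
  proof
    fix \<pi> assume "\<pi> \<in> (\<lambda>(p, q). glue A p q) ` (Smaps n d (V - A \<union> {x}) a x \<times> Sline n d A x)"
    then obtain p q z where p: "p \<in> Smaps n d (V - A \<union> {x}) a x" and \<pi>: "\<pi> = glue A p q"
      and z: "z \<in> line n d (int n) \<inter> A" and q: "q \<in> Smaps n d A x z"
      by (auto simp: Sline_def)
    have "glue A p q \<in> Sline n d V a"
      using glue_in_Smaps[OF p q] z A_sub by (auto simp: Sline_def)
    moreover have "glue A p q ` A \<subseteq> A" using q by (auto simp: Smaps_def glue_def)
    ultimately show "\<pi> \<in> Sline n d V a \<inter> inv_first_event n d a A x"
      using glue_first_in[OF p] \<pi> by (simp add: inv_first_event_iff[OF A_Lam])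
  qed
  show "(\<lambda>\<pi>. (id_outside (V - A) \<pi>, id_outside A \<pi>)) ` (Sline n d V a \<inter> inv_first_event n d a A x)
      \<subseteq> Smaps n d (V - A \<union> {x}) a x \<times> Sline n d A x"
  proof
    fix pq assume "pq \<in> (\<lambda>\<pi>. (id_outside (V - A) \<pi>, id_outside A \<pi>)) `
        (Sline n d V a \<inter> inv_first_event n d a A x)"
    then obtain \<pi> z j where pq: "pq = (id_outside (V - A) \<pi>, id_outside A \<pi>)"
      and z: "z \<in> line n d (int n)" and \<pi>: "\<pi> \<in> Smaps n d V a z"
      and hit: "\<pi> ` A \<subseteq> A" "(\<pi> ^^ j) a \<in> A" "first_in \<pi> a A = x"
      by (auto simp: Sline_def inv_first_event_iff[OF A_Lam])
    from id_outside_in_Smaps[OF \<pi> hit] show "pq \<in> Smaps n d (V - A \<union> {x}) a x \<times> Sline n d A x"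
      using pq z by (auto simp: Sline_def)
  qed
qed

lemma sum_inv_first_event_glue:
  "(\<Sum>\<pi> \<in> Sline n d V a \<inter> inv_first_event n d a A x. h \<pi>) =
   (\<Sum>p \<in> Smaps n d (V - A \<union> {x}) a x. \<Sum>q \<in> Sline n d A x. h (glue A p q))"
  by (simp add: sum.reindex_bij_betw[OF bij_betw_glue_inv_first_event, symmetric]
      sum.cartesian_product case_prod_unfold)

lemma wt_glue:
  assumes p: "p \<in> Smaps n d (V - A \<union> {x}) a x" and q: "q \<in> Sline n d A x"
  shows "wt \<alpha> V (glue A p q) = wt \<alpha> (V - A \<union> {x}) p * wt \<alpha> A q"
proof -
  have "p x = x" using p by (simp add: Smaps_def)
  then have "{y \<in> V. glue A p q y \<noteq> y} = {y \<in> V - A \<union> {x}. p y \<noteq> y} \<union> {y \<in> A. q y \<noteq> y}"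
    and "{y \<in> V - A \<union> {x}. p y \<noteq> y} \<inter> {y \<in> A. q y \<noteq> y} = {}"
    using A_sub x_in by (auto simp: glue_def)
  then have "Ham V (glue A p q) = Ham (V - A \<union> {x}) p + Ham A q"
    unfolding Ham_def using finite_V finite_subset[OF A_sub finite_V] by (simp add: card_Un_disjoint)
  then show ?thesis by (simp add: wt_def algebra_simps flip: exp_add)
qed

lemma restr_lift_glue_outside:
  assumes "f \<in> borel_measurable (Falg (Sline n d V a) (V - A))"
    and p: "p \<in> Smaps n d (V - A \<union> {x}) a x" and q: "q \<in> Sline n d A x"
  shows "restr_lift (Sline n d V a) (V - A) f p = f (glue A p q)"
proof (rule restr_lift_eq[OF assms(1)])
  show "glue A p q \<in> Sline n d V a"
    using bij_betw_apply[OF bij_betw_glue_inv_first_event, of "(p, q)"] p q by auto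
qed (simp add: glue_def)

lemma restr_lift_glue_inside:
  assumes "g \<in> borel_measurable (Falg (Sline n d V a) A)"
    and p: "p \<in> Smaps n d (V - A \<union> {x}) a x" and q: "q \<in> Sline n d A x"
  shows "restr_lift (Sline n d V a) A g q = g (glue A p q)"
proof (rule restr_lift_eq[OF assms(1)])
  show "glue A p q \<in> Sline n d V a"
    using bij_betw_apply[OF bij_betw_glue_inv_first_event, of "(p, q)"] p q by auto
qed (simp add: glue_def)

lemma sum_inv_first_event_product:
  assumes f: "f \<in> borel_measurable (Falg (Sline n d V a) (V - A))"
    and g: "g \<in> borel_measurable (Falg (Sline n d V a) A)"
  shows "(\<Sum>\<pi> \<in> Sline n d V a \<inter> inv_first_event n d a A x. wt \<alpha> V \<pi> * (f \<pi> * g \<pi>)) =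
    (\<Sum>p \<in> Smaps n d (V - A \<union> {x}) a x.
      wt \<alpha> (V - A \<union> {x}) p * restr_lift (Sline n d V a) (V - A) f p)
    * (\<Sum>q \<in> Sline n d A x. wt \<alpha> A q * restr_lift (Sline n d V a) A g q)"
  unfolding sum_inv_first_event_glue sum_product
  by (intro sum.cong refl)
     (simp add: wt_glue restr_lift_glue_outside[OF f] restr_lift_glue_inside[OF g])

lemma Pw_inv_first_event:
  "Pw \<alpha> V (Sline n d V a) (inv_first_event n d a A x) =
     Zsum \<alpha> (V - A \<union> {x}) (Smaps n d (V - A \<union> {x}) a x) * Zsum \<alpha> A (Sline n d A x)
     / Zsum \<alpha> V (Sline n d V a)"
proof -
  have "(\<Sum>\<pi> \<in> Sline n d V a \<inter> inv_first_event n d a A x. wt \<alpha> V \<pi> * (1 * 1)) =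
    (\<Sum>p \<in> Smaps n d (V - A \<union> {x}) a x.
      wt \<alpha> (V - A \<union> {x}) p * restr_lift (Sline n d V a) (V - A) (\<lambda>_. 1) p)
    * (\<Sum>q \<in> Sline n d A x. wt \<alpha> A q * restr_lift (Sline n d V a) A (\<lambda>_. 1) q)"
    by (intro sum_inv_first_event_product borel_measurable_const)
  then show ?thesis by (simp add: Pw_def Zsum_def)
qed

lemma Ew_inv_first_event_product:
  assumes f: "f \<in> borel_measurable (Falg (Sline n d V a) (V - A))"
    and g: "g \<in> borel_measurable (Falg (Sline n d V a) A)"
  shows "Ew \<alpha> V (Sline n d V a) (\<lambda>\<pi>. f \<pi> * g \<pi> * indicator (inv_first_event n d a A x) \<pi>) =
    Ew \<alpha> (V - A \<union> {x}) (Smaps n d (V - A \<union> {x}) a x) (restr_lift (Sline n d V a) (V - A) f)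
    * Ew \<alpha> A (Sline n d A x) (restr_lift (Sline n d V a) A g)
    * Pw \<alpha> V (Sline n d V a) (inv_first_event n d a A x)"
proof -
  have fin: "finite (Sline n d V a)" "finite (Smaps n d (V - A \<union> {x}) a x)" "finite (Sline n d A x)"
    using finite_V finite_subset[OF A_sub finite_V] by (auto intro: finite_Sline finite_Smaps)
  show ?thesis
    unfolding Ew_mult_indicator[OF fin(1)] sum_inv_first_event_product[OF f g]
      Ew_mult_Zsum[OF fin(2), symmetric] Ew_mult_Zsum[OF fin(3), symmetric] Pw_inv_first_event
    by simp
qed

lemma Econd_inv_first_event_product:
  assumes "f \<in> borel_measurable (Falg (Sline n d V a) (V - A))"
    and "g \<in> borel_measurable (Falg (Sline n d V a) A)"
    and "Pw \<alpha> V (Sline n d V a) (inv_first_event n d a A x) > 0"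
  shows "Econd \<alpha> V (Sline n d V a) (\<lambda>\<pi>. f \<pi> * g \<pi>) (inv_first_event n d a A x) =
    Ew \<alpha> (V - A \<union> {x}) (Smaps n d (V - A \<union> {x}) a x) (restr_lift (Sline n d V a) (V - A) f)
    * Ew \<alpha> A (Sline n d A x) (restr_lift (Sline n d V a) A g)"
  using Ew_inv_first_event_product[OF assms(1,2)] assms(3) by (simp add: Econd_def)

lemma Econd_inv_first_event_outside:
  assumes "f \<in> borel_measurable (Falg (Sline n d V a) (V - A))"
    and P: "Pw \<alpha> V (Sline n d V a) (inv_first_event n d a A x) > 0"
  shows "Econd \<alpha> V (Sline n d V a) f (inv_first_event n d a A x) =
    Ew \<alpha> (V - A \<union> {x}) (Smaps n d (V - A \<union> {x}) a x) (restr_lift (Sline n d V a) (V - A) f)"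
proof -
  have "Zsum \<alpha> A (Sline n d A x) \<noteq> 0" using P by (auto simp: Pw_inv_first_event)
  then show ?thesis
    using Econd_inv_first_event_product[OF assms(1) borel_measurable_const[of "1::real"] P]
    by (simp add: Ew_const_one)
qed

lemma Econd_inv_first_event_inside:
  assumes "g \<in> borel_measurable (Falg (Sline n d V a) A)"
    and P: "Pw \<alpha> V (Sline n d V a) (inv_first_event n d a A x) > 0"
  shows "Econd \<alpha> V (Sline n d V a) g (inv_first_event n d a A x) =
    Ew \<alpha> A (Sline n d A x) (restr_lift (Sline n d V a) A g)"
proof -
  have "Zsum \<alpha> (V - A \<union> {x}) (Smaps n d (V - A \<union> {x}) a x) \<noteq> 0"
    using P by (auto simp: Pw_inv_first_event)
  then show ?thesis
    using Econd_inv_first_event_product[OF borel_measurable_const[of "1::real"] assms(1) P]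
    by (simp add: Ew_const_one)
qed

text \<open>Conditioning further on an outside event Q only reweights the outside factor,
  which cancels.\<close>
lemma Econd_inv_first_event_inter_outside:
  assumes g: "g \<in> borel_measurable (Falg (Sline n d V a) A)"
    and Q: "Q \<in> sets (Falg (Sline n d V a) (V - A))"
    and PQ: "Pw \<alpha> V (Sline n d V a) (inv_first_event n d a A x \<inter> Q) > 0"
  shows "Econd \<alpha> V (Sline n d V a) g (inv_first_event n d a A x \<inter> Q) =
    Ew \<alpha> A (Sline n d A x) (restr_lift (Sline n d V a) A g)"
proof -
  let ?E = "inv_first_event n d a A x" and ?Om = "Sline n d V a"
  have iQ: "indicator Q \<in> borel_measurable (Falg ?Om (V - A))"
    using Q by (rule borel_measurable_indicator)
  let ?c = "Ew \<alpha> (V - A \<union> {x}) (Smaps n d (V - A \<union> {x}) a x)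
    (restr_lift ?Om (V - A) (indicator Q))"
  let ?one = "Ew \<alpha> A (Sline n d A x) (\<lambda>_. 1)"
  have "Ew \<alpha> V ?Om (\<lambda>\<pi>. g \<pi> * indicator (?E \<inter> Q) \<pi>)
      = Ew \<alpha> V ?Om (\<lambda>\<pi>. indicator Q \<pi> * g \<pi> * indicator ?E \<pi>)"
    by (simp add: indicator_inter_arith ac_simps)
  also have "\<dots> = ?c * Ew \<alpha> A (Sline n d A x) (restr_lift ?Om A g) * Pw \<alpha> V ?Om ?E"
    by (rule Ew_inv_first_event_product[OF iQ g])
  finally have num: "Ew \<alpha> V ?Om (\<lambda>\<pi>. g \<pi> * indicator (?E \<inter> Q) \<pi>)
      = ?c * Ew \<alpha> A (Sline n d A x) (restr_lift ?Om A g) * Pw \<alpha> V ?Om ?E" .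
  have "indicator (?E \<inter> Q) = (\<lambda>\<pi>. indicator Q \<pi> * 1 * indicator ?E \<pi> :: real)"
    by (simp add: fun_eq_iff indicator_inter_arith)
  then have "Pw \<alpha> V ?Om (?E \<inter> Q) = Ew \<alpha> V ?Om (\<lambda>\<pi>. indicator Q \<pi> * 1 * indicator ?E \<pi>)"
    using finite_Sline[OF finite_V] by (simp add: Pw_eq_Ew_indicator)
  also have "\<dots> = ?c * ?one * Pw \<alpha> V ?Om ?E"
    using Ew_inv_first_event_product[OF iQ borel_measurable_const[of "1::real"]] by simp
  finally have den: "Pw \<alpha> V ?Om (?E \<inter> Q) = ?c * ?one * Pw \<alpha> V ?Om ?E" .
  with PQ have nz: "?c \<noteq> 0" "?one \<noteq> 0" "Pw \<alpha> V ?Om ?E \<noteq> 0" by auto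
  then have "?one = 1" by (simp add: Ew_const_one split: if_splits)
  with nz show ?thesis by (simp add: Econd_def num den)
qed

end

theorem proposition5p1:
  fixes n d :: nat and \<alpha> :: real and A :: "pt set" and a x :: pt
  assumes "1 \<le> d"
    and "A \<subseteq> Lam n d"
    and "a \<in> Lam n d - A"
    and "x \<in> A"
  shows
   "Pw \<alpha> (Lam n d) (Sline n d (Lam n d) a) (inv_first_event n d a A x) =
      Zsum \<alpha> (Lam n d - A \<union> {x}) (Smaps n d (Lam n d - A \<union> {x}) a x)
      * Zsum \<alpha> A (Sline n d A x) / Zsum \<alpha> (Lam n d) (Sline n d (Lam n d) a)
    \<and> (\<forall>f. f \<in> borel_measurable (Falg (Sline n d (Lam n d) a) (Lam n d - A)) \<longrightarrow>
          Pw \<alpha> (Lam n d) (Sline n d (Lam n d) a) (inv_first_event n d a A x) > 0 \<longrightarrow>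
          Econd \<alpha> (Lam n d) (Sline n d (Lam n d) a) f (inv_first_event n d a A x) =
          Ew \<alpha> (Lam n d - A \<union> {x}) (Smaps n d (Lam n d - A \<union> {x}) a x)
             (restr_lift (Sline n d (Lam n d) a) (Lam n d - A) f))
    \<and> (\<forall>g. g \<in> borel_measurable (Falg (Sline n d (Lam n d) a) A) \<longrightarrow>
          Pw \<alpha> (Lam n d) (Sline n d (Lam n d) a) (inv_first_event n d a A x) > 0 \<longrightarrow>
          Econd \<alpha> (Lam n d) (Sline n d (Lam n d) a) g (inv_first_event n d a A x) =
          Ew \<alpha> A (Sline n d A x) (restr_lift (Sline n d (Lam n d) a) A g))
    \<and> (\<forall>f g. f \<in> borel_measurable (Falg (Sline n d (Lam n d) a) (Lam n d - A)) \<longrightarrow>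
          g \<in> borel_measurable (Falg (Sline n d (Lam n d) a) A) \<longrightarrow>
          Pw \<alpha> (Lam n d) (Sline n d (Lam n d) a) (inv_first_event n d a A x) > 0 \<longrightarrow>
          Econd \<alpha> (Lam n d) (Sline n d (Lam n d) a) (\<lambda>\<pi>. f \<pi> * g \<pi>) (inv_first_event n d a A x) =
          Ew \<alpha> (Lam n d - A \<union> {x}) (Smaps n d (Lam n d - A \<union> {x}) a x)
             (restr_lift (Sline n d (Lam n d) a) (Lam n d - A) f)
          * Ew \<alpha> A (Sline n d A x) (restr_lift (Sline n d (Lam n d) a) A g))
    \<and> (\<forall>g Q. g \<in> borel_measurable (Falg (Sline n d (Lam n d) a) A) \<longrightarrow>
          Q \<in> sets (Falg (Sline n d (Lam n d) a) (Lam n d - A)) \<longrightarrow>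
          Pw \<alpha> (Lam n d) (Sline n d (Lam n d) a) (inv_first_event n d a A x \<inter> Q) > 0 \<longrightarrow>
          Econd \<alpha> (Lam n d) (Sline n d (Lam n d) a) g (inv_first_event n d a A x \<inter> Q) =
          Ew \<alpha> A (Sline n d A x) (restr_lift (Sline n d (Lam n d) a) A g))"
proof -
  have setting: "Lam n d \<subseteq> Lam n d" "A \<subseteq> Lam n d" "a \<in> Lam n d - A" "x \<in> A"
    using assms by auto
  show ?thesis
    using Pw_inv_first_event[OF setting] Econd_inv_first_event_outside[OF setting]
      Econd_inv_first_event_inside[OF setting] Econd_inv_first_event_product[OF setting]
      Econd_inv_first_event_inter_outside[OF setting]
    by blast
qed

end
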